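(* In any quiver, normality is anti-hereditary: if $B$ is a normal vertex and $A$ is an ancestor of $B$, then $A$ is normal.
   Context: A quiver consists of a class of vertices and, for each ordered pair of vertices $(A,B)$, a set of edges $A\to B$ (loops and multiple edges allowed). An evolution of length $m\ge 0$ is a sequence $A_0\leftarrow A_1\leftarrow\cdots\leftarrow A_m$ of vertices together with edges $A_k\to A_{k-1}$ ($1\le k\le m$); $A_0$ is its initial and $A_m$ its terminal vertex. Write $A\le B$ ($A$ is an ancestor of $B$) if there is an evolution with initial vertex $A$ and terminal vertex $B$; $A,B$ are isotypic if $A\le B$ and $B\le A$. A vertex $A$ is primitive if every ancestor of $A$ is isotypic to $A$. A full evolution for $X$ is an evolution with primitive initial vertex and terminal vertex $X$. The height $h(X)$ is the smallest length of a full evolution for $X$ ($\infty$ if none). A vertex $A_k$ ($0\le k<m$) of an evolution $A_0\leftarrow\cdots\leftarrow A_m$ is critical if $h(A_k)<\infty$ and $h(A_{k+1})=h(A_k)+1$. The critical ancestors of a vertex $B$ are the critical vertices of full evolutions terminating at $B$. $B$ is normal if any two critical ancestors of $B$ of equal height are isotypic. *)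

theory Defs
  imports Main "HOL-Library.Extended_Nat"
begin

text \<open>A quiver is given by its vertex type 'v and, for each ordered pair (A,B),
the set Q A B of edges A -> B (edges of type 'e).
An evolution A_0 <- A_1 <- ... <- A_m is represented by the list of vertices
[A_0,...,A_m] and the list of edges [e_1,...,e_m] with e_k an edge A_k -> A_(k-1).\<close>

type_synonym ('v, 'e) quiver = "'v \<Rightarrow> 'v \<Rightarrow> 'e set"

definition evolution :: "('v, 'e) quiver \<Rightarrow> 'v list \<Rightarrow> 'e list \<Rightarrow> bool" where
  "evolution Q vs es \<longleftrightarrow> vs \<noteq> [] \<and> length es = length vs - 1 \<and>
     (\<forall>k. 1 \<le> k \<and> k < length vs \<longrightarrow> es ! (k - 1) \<in> Q (vs ! k) (vs ! (k - 1)))"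

text \<open>length of an evolution: m = length vs - 1; initial vertex hd vs, terminal vertex last vs.\<close>

definition ancestor :: "('v, 'e) quiver \<Rightarrow> 'v \<Rightarrow> 'v \<Rightarrow> bool" where
  "ancestor Q A B \<longleftrightarrow> (\<exists>vs es. evolution Q vs es \<and> hd vs = A \<and> last vs = B)"

definition isotypic :: "('v, 'e) quiver \<Rightarrow> 'v \<Rightarrow> 'v \<Rightarrow> bool" where
  "isotypic Q A B \<longleftrightarrow> ancestor Q A B \<and> ancestor Q B A"

definition primitive :: "('v, 'e) quiver \<Rightarrow> 'v \<Rightarrow> bool" where
  "primitive Q A \<longleftrightarrow> (\<forall>C. ancestor Q C A \<longrightarrow> isotypic Q C A)"

definition full_evolution :: "('v, 'e) quiver \<Rightarrow> 'v \<Rightarrow> 'v list \<Rightarrow> 'e list \<Rightarrow> bool" where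
  "full_evolution Q X vs es \<longleftrightarrow> evolution Q vs es \<and> primitive Q (hd vs) \<and> last vs = X"

text \<open>Height: least length of a full evolution for X; infinity (Inf of the empty set) if none.\<close>
definition height :: "('v, 'e) quiver \<Rightarrow> 'v \<Rightarrow> enat" where
  "height Q X = (INF p \<in> {(vs, es). full_evolution Q X vs es}. enat (length (fst p) - 1))"

definition critical_index :: "('v, 'e) quiver \<Rightarrow> 'v list \<Rightarrow> nat \<Rightarrow> bool" where
  "critical_index Q vs k \<longleftrightarrow> k < length vs - 1 \<and> height Q (vs ! k) < \<infinity> \<and>
     height Q (vs ! Suc k) = height Q (vs ! k) + 1"

definition critical_ancestors :: "('v, 'e) quiver \<Rightarrow> 'v \<Rightarrow> 'v set" where
  "critical_ancestors Q B =
     {vs ! k | vs es k. full_evolution Q B vs es \<and> critical_index Q vs k}"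

definition normal :: "('v, 'e) quiver \<Rightarrow> 'v \<Rightarrow> bool" where
  "normal Q B \<longleftrightarrow> (\<forall>C \<in> critical_ancestors Q B. \<forall>D \<in> critical_ancestors Q B.
      height Q C = height Q D \<longrightarrow> isotypic Q C D)"

end

theory Submission
  imports Defs
begin

text \<open>Appending to a full evolution of \<open>A\<close> an evolution from \<open>A\<close> to \<open>B\<close> gives a full
evolution of \<open>B\<close>. Criticality of a vertex only depends on the heights of that vertex and the
next one, so the critical vertices of the shorter evolution stay critical in the longer one.
Hence the critical ancestors of \<open>A\<close> are critical ancestors of \<open>B\<close>, and normality, a condition
on all pairs of critical ancestors, passes from \<open>B\<close> down to \<open>A\<close>.\<close>

lemma evolution_append:
  assumes vs: "evolution Q vs es" and ws: "evolution Q ws fs" and "last vs = hd ws"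
  shows "evolution Q (vs @ tl ws) (es @ fs)"
  unfolding evolution_def
proof (intro conjI allI impI)
  have lv: "vs \<noteq> []" "length es = length vs - 1" using vs by (auto simp: evolution_def)
  have lw: "ws \<noteq> []" "length fs = length ws - 1" using ws by (auto simp: evolution_def)
  show "vs @ tl ws \<noteq> []" using lv by simp
  show "length (es @ fs) = length (vs @ tl ws) - 1" using lv lw by (cases vs; cases ws) auto
  fix k assume k: "1 \<le> k \<and> k < length (vs @ tl ws)"
  show "(es @ fs) ! (k - 1) \<in> Q ((vs @ tl ws) ! k) ((vs @ tl ws) ! (k - 1))"
  proof (cases "k < length vs")
    case True
    then show ?thesis using vs k lv by (auto simp: evolution_def nth_append)
  next
    case False
    define j where "j = k - length vs + 1"
    have j: "1 \<le> j" "j < length ws" using k False lw by (auto simp: j_def)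
    have edge: "(es @ fs) ! (k - 1) = fs ! (j - 1)" using False lv k by (auto simp: nth_append j_def)
    have target: "(vs @ tl ws) ! k = ws ! j" using False lv lw k by (auto simp: nth_append j_def nth_tl)
    have source: "(vs @ tl ws) ! (k - 1) = ws ! (j - 1)"
    proof (cases "k = length vs")
      case True
      then have "(vs @ tl ws) ! (k - 1) = last vs" using lv by (simp add: nth_append last_conv_nth)
      also have "\<dots> = ws ! 0" using assms(3) lw by (simp add: hd_conv_nth)
      finally show ?thesis using True by (simp add: j_def)
    next
      case False
      with \<open>\<not> k < length vs\<close> lv lw k show ?thesis
        by (auto simp: nth_append j_def nth_tl Suc_diff_Suc)
    qed
    show ?thesis using ws j unfolding edge target source evolution_def by auto
  qed
qed

lemma full_evolution_append:
  assumes "full_evolution Q A vs es" and "evolution Q ws fs" and "hd ws = A"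
  shows "full_evolution Q (last ws) (vs @ tl ws) (es @ fs)"
proof -
  have ne: "vs \<noteq> []" "ws \<noteq> []" using assms by (auto simp: full_evolution_def evolution_def)
  then have "last (vs @ tl ws) = last ws"
    using assms by (cases ws) (auto simp: full_evolution_def)
  with assms ne show ?thesis by (simp add: full_evolution_def evolution_append)
qed

lemma critical_index_append:
  assumes "critical_index Q vs k"
  shows "critical_index Q (vs @ ws) k"
  using assms by (auto simp: critical_index_def nth_append)

lemma critical_ancestors_mono:
  assumes "ancestor Q A B"
  shows "critical_ancestors Q A \<subseteq> critical_ancestors Q B"
proof
  fix C assume "C \<in> critical_ancestors Q A"
  then obtain vs es k where C: "C = vs ! k" and full: "full_evolution Q A vs es"
    and crit: "critical_index Q vs k" unfolding critical_ancestors_def by blast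
  obtain ws fs where ws: "evolution Q ws fs" "hd ws = A" "last ws = B"
    using assms unfolding ancestor_def by blast
  have "full_evolution Q B (vs @ tl ws) (es @ fs)"
    using full_evolution_append[OF full ws(1,2)] ws(3) by simp
  moreover have "critical_index Q (vs @ tl ws) k" using crit by (rule critical_index_append)
  moreover have "C = (vs @ tl ws) ! k" using C crit by (auto simp: critical_index_def nth_append)
  ultimately show "C \<in> critical_ancestors Q B" unfolding critical_ancestors_def by blast
qed

theorem lemma4p1:
  fixes Q :: "('v, 'e) quiver" and A B :: 'v
  assumes "normal Q B" and "ancestor Q A B"
  shows "normal Q A"
  using assms critical_ancestors_mono[OF assms(2)] unfolding normal_def by blast

end
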